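(* Let $R$ be a domain satisfying the ascending chain condition for principal ideals, and let $a\in R$ be a non-zero element with $a\notin R^{\ast}$. Then: (i) there exist $b\in R$ and $c\in\operatorname{Sqf} R$ such that $a=b^2c$; (ii) there exist $n\geqslant 0$ and $s_0,s_1,\dots,s_n\in\operatorname{Sqf} R$ such that $a=s_n^{2^n}s_{n-1}^{2^{n-1}}\cdots s_1^2s_0$; (iii) there exist $n\geqslant 1$, $s_1,\dots,s_n\in(\operatorname{Sqf} R)\setminus R^{\ast}$, integers $0\leqslant k_1<k_2<\dots<k_n$, and $c\in R^{\ast}$ such that $a=c\,s_n^{2^{k_n}}s_{n-1}^{2^{k_{n-1}}}\cdots s_1^{2^{k_1}}$.
   Context: A domain is a commutative ring with identity without zero divisors. $R^{\ast}$ denotes the set of invertible elements of $R$. An element $a\in R$ is square-free if it cannot be written as $a=b^2c$ with $b\in R\setminus R^{\ast}$ and $c\in R$; $\operatorname{Sqf} R$ denotes the set of square-free elements of $R$. *)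

theory Defs
  imports "HOL-Computational_Algebra.Squarefree"
begin

definition pideal :: "'a :: comm_ring_1 \<Rightarrow> 'a set" where
  "pideal x = {r * x | r. True}"

definition ACCP :: "'a :: comm_ring_1 itself \<Rightarrow> bool" where
  "ACCP _ \<longleftrightarrow> (\<forall>f :: nat \<Rightarrow> 'a. (\<forall>n. pideal (f n) \<subseteq> pideal (f (Suc n))) \<longrightarrow>
                  (\<exists>N. \<forall>n\<ge>N. pideal (f n) = pideal (f N)))"

end

theory Submission
  imports Defs
begin

text \<open>
  Under ACCP, strict divisibility is well-founded, so we may argue by well-founded induction.
  A non-squarefree \<open>a \<noteq> 0\<close> factors as \<open>x\<^sup>2 c\<close> with \<open>x\<close> a non-unit, and \<open>c\<close> is a strictly smaller
  divisor; iterating gives (i). Applying (i) again to the square root \<open>b\<close> in \<open>a = b\<^sup>2 c\<close>, which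
  is strictly smaller whenever it is a non-unit, gives (ii). Finally (iii) is a regrouping of (ii):
  the factors that are units merge into one unit, and the remaining ones are listed in increasing
  order of their exponents.
\<close>

lemma wf_strict_dvd_if_ACCP:
  assumes "ACCP TYPE('a::idom)"
  shows "wf {(x::'a, y). x dvd y \<and> \<not> y dvd x}"
proof (rule ccontr)
  assume "\<not> ?thesis"
  then obtain f :: "nat \<Rightarrow> 'a" where f: "\<And>i. f (Suc i) dvd f i \<and> \<not> f i dvd f (Suc i)"
    unfolding wf_iff_no_infinite_down_chain by blast
  have "pideal (f n) \<subseteq> pideal (f (Suc n))" for n
    using f[of n] unfolding pideal_def by (auto elim!: dvdE intro: exI[of _ "_ * _"] simp: mult.assoc)
  with assms obtain N where "pideal (f (Suc N)) = pideal (f N)"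
    unfolding ACCP_def by (metis le_SucI order_refl)
  moreover have "f (Suc N) \<in> pideal (f (Suc N))"
    unfolding pideal_def by force
  ultimately have "f N dvd f (Suc N)"
    unfolding pideal_def by auto
  with f[of N] show False by blast
qed

lemma power_dvd_one_iff:
  fixes x :: "'a::comm_semiring_1"
  shows "x ^ n dvd 1 \<longleftrightarrow> x dvd 1 \<or> n = 0"
proof
  assume "x ^ n dvd 1"
  then show "x dvd 1 \<or> n = 0"
    by (cases n) (auto intro: dvd_trans[OF dvd_power[of _ x]])
qed (metis dvd_power_same power_one power_0 dvd_refl)

lemma squarefree_if_dvd_one:
  fixes u :: "'a::comm_semiring_1"
  assumes "u dvd 1"
  shows "squarefree u"
proof (rule squarefreeI)
  fix x :: 'a
  assume "x\<^sup>2 dvd u"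
  with assms have "x\<^sup>2 dvd 1" by (rule dvd_trans[rotated])
  then show "x dvd 1" by (simp add: power_dvd_one_iff)
qed

lemma strict_dvd_of_nonunit_cofactor:
  fixes a :: "'a::idom"
  assumes "a \<noteq> 0" "a = x * y" "\<not> x dvd 1"
  shows "y dvd a \<and> \<not> a dvd y"
proof
  show "y dvd a" using assms(2) by simp
  show "\<not> a dvd y"
  proof
    assume "a dvd y"
    then have "x * y dvd 1 * y" using assms(2) by simp
    moreover have "y \<noteq> 0" using assms(1,2) by auto
    ultimately show False
      using assms(3) dvd_mult_cancel_right by metis
  qed
qed

lemma square_times_squarefree_decomposition:
  fixes a :: "'a::idom"
  assumes "ACCP TYPE('a)"
  shows "\<exists>b c. squarefree c \<and> a = b\<^sup>2 * c"
proof (induction a rule: wf_induct_rule[OF wf_strict_dvd_if_ACCP[OF assms]])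
  case (1 a)
  consider (zero) "a = 0" | (squarefree) "squarefree a" | (nonsquarefree) "a \<noteq> 0" "\<not> squarefree a"
    by blast
  then show ?case
  proof cases
    case zero
    show ?thesis by (intro exI[of _ 0] exI[of _ 1]) (simp add: zero squarefree_if_dvd_one)
  next
    case squarefree
    show ?thesis by (intro exI[of _ 1] exI[of _ a]) (simp add: squarefree)
  next
    case nonsquarefree
    then obtain x c where x: "\<not> x dvd 1" "a = x\<^sup>2 * c"
      unfolding squarefree_def by (meson dvdE)
    moreover have "\<not> x\<^sup>2 dvd 1"
      using x(1) by (simp add: power_dvd_one_iff)
    ultimately obtain b c' where "squarefree c'" "c = b\<^sup>2 * c'"
      using "1.IH" strict_dvd_of_nonunit_cofactor[OF \<open>a \<noteq> 0\<close>] by blast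
    with x(2) show ?thesis
      by (intro exI[of _ "x * b"] exI[of _ c']) (simp add: algebra_simps power_mult_distrib)
  qed
qed

lemma squarefree_dyadic_decomposition:
  fixes a :: "'a::idom"
  assumes "ACCP TYPE('a)" "a \<noteq> 0"
  shows "\<exists>n s. (\<forall>i\<le>n. squarefree (s i)) \<and> a = (\<Prod>i\<le>n. s i ^ 2 ^ i)"
  using assms(2)
proof (induction a rule: wf_induct_rule[OF wf_strict_dvd_if_ACCP[OF assms(1)]])
  case (1 a)
  obtain b c where bc: "squarefree c" "a = b\<^sup>2 * c"
    using square_times_squarefree_decomposition[OF assms(1)] by blast
  show ?case
  proof (cases "b dvd 1")
    case True
    then have "b\<^sup>2 * c dvd 1 * c"
      by (intro mult_dvd_mono) (simp_all add: power_dvd_one_iff)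
    then have "squarefree a"
      using bc squarefree_mono[of a c] by simp
    then show ?thesis by (intro exI[of _ 0] exI[of _ "\<lambda>_. a"]) simp
  next
    case False
    have "a = (b * c) * b" "\<not> (b * c) dvd 1" "b \<noteq> 0"
      using bc(2) False \<open>a \<noteq> 0\<close> by (auto simp: power2_eq_square dest: dvd_mult_left)
    then obtain m t where t: "\<forall>i\<le>m. squarefree (t i)" "b = (\<Prod>i\<le>m. t i ^ 2 ^ i)"
      using "1.IH" strict_dvd_of_nonunit_cofactor[OF \<open>a \<noteq> 0\<close>] by blast
    define s where "s i = (if i = 0 then c else t (i - 1))" for i
    have "(\<Prod>i\<le>Suc m. s i ^ 2 ^ i) = c * (\<Prod>i\<le>m. (t i ^ 2 ^ i)\<^sup>2)"
      by (subst prod.atMost_Suc_shift) (simp add: s_def power_mult[symmetric] mult.commute)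
    also have "\<dots> = a"
      using bc t by (simp add: prod_power_distrib mult.commute)
    finally show ?thesis
      using t bc by (intro exI[of _ "Suc m"] exI[of _ s]) (auto simp: s_def)
  qed
qed

lemma finite_nat_set_increasing_enumeration:
  fixes J :: "nat set"
  assumes "finite J"
  shows "\<exists>k. bij_betw k {1..card J} J \<and> (\<forall>i\<in>{1..<card J}. k i < k (Suc i))"
proof -
  define l where "l = sorted_list_of_set J"
  have l: "distinct l" "set l = J" "length l = card J" "sorted_wrt (<) l"
    using assms by (simp_all add: l_def strict_sorted_list_of_set)
  have "bij_betw (\<lambda>j. j - 1) {1..card J} {..<card J}"
    by (rule bij_betw_byWitness[where f' = Suc]) auto
  moreover have "bij_betw ((!) l) {..<card J} J"
    using l by (intro bij_betw_nth) simp_all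
  ultimately have "bij_betw (\<lambda>j. l ! (j - 1)) {1..card J} J"
    using bij_betw_trans unfolding comp_def by blast
  moreover have "\<forall>i\<in>{1..<card J}. l ! (i - 1) < l ! (Suc i - 1)"
    using l by (auto intro: sorted_wrt_nth_less)
  ultimately show ?thesis by blast
qed

lemma dyadic_decomposition_into_nonunits:
  fixes s :: "nat \<Rightarrow> 'a::idom"
  assumes "\<forall>i\<le>n. squarefree (s i)" "\<not> (\<Prod>i\<le>n. s i ^ 2 ^ i) dvd 1"
  shows "\<exists>m t k c. m \<ge> 1 \<and> (\<forall>i\<in>{1..m}. squarefree (t i) \<and> \<not> t i dvd 1) \<and>
           (\<forall>i\<in>{1..<m}. k i < k (Suc i)) \<and> c dvd 1 \<and>
           (\<Prod>i\<le>n. s i ^ 2 ^ i) = c * (\<Prod>i=1..m. t i ^ 2 ^ k i)"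
proof -
  define J where "J = {i. i \<le> n \<and> \<not> s i dvd 1}"
  define c where "c = (\<Prod>i\<in>{..n} - J. s i ^ 2 ^ i)"
  have "J \<subseteq> {..n}" "finite J" by (auto simp: J_def)
  then have split: "(\<Prod>i\<le>n. s i ^ 2 ^ i) = c * (\<Prod>i\<in>J. s i ^ 2 ^ i)"
    unfolding c_def by (simp add: prod.subset_diff)
  have "c dvd (\<Prod>i\<in>{..n} - J. 1)"
    unfolding c_def by (rule prod_dvd_prod) (auto simp: J_def power_dvd_one_iff)
  then have "c dvd 1" by simp
  with assms(2) split have "J \<noteq> {}" by auto
  obtain k where k: "bij_betw k {1..card J} J" "\<forall>i\<in>{1..<card J}. k i < k (Suc i)"
    using finite_nat_set_increasing_enumeration[OF \<open>finite J\<close>] by blast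
  have "(\<Prod>i\<in>J. s i ^ 2 ^ i) = (\<Prod>j=1..card J. s (k j) ^ 2 ^ k j)"
    using prod.reindex_bij_betw[OF k(1), of "\<lambda>i. s i ^ 2 ^ i"] by simp
  moreover have "\<forall>j\<in>{1..card J}. squarefree (s (k j)) \<and> \<not> s (k j) dvd 1"
    using assms(1) bij_betwE[OF k(1)] by (auto simp: J_def)
  moreover have "card J \<ge> 1"
    using \<open>finite J\<close> \<open>J \<noteq> {}\<close> by (simp add: Suc_le_eq card_gt_0_iff)
  ultimately show ?thesis
    using split k(2) \<open>c dvd 1\<close> by (intro exI[of _ "card J"] exI[of _ "s \<circ> k"] exI[of _ k] exI[of _ c]) auto
qed

theorem proposition1:
  fixes a :: "'a :: idom"
  assumes "ACCP TYPE('a)"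
    and "a \<noteq> 0"
    and "\<not> a dvd 1"
  shows "(\<exists>b c. squarefree c \<and> a = b ^ 2 * c)
       \<and> (\<exists>(n::nat) (s :: nat \<Rightarrow> 'a). (\<forall>i\<le>n. squarefree (s i)) \<and>
            a = (\<Prod>i\<le>n. s i ^ (2 ^ i)))
       \<and> (\<exists>(n::nat) (s :: nat \<Rightarrow> 'a) (k :: nat \<Rightarrow> nat) c. n \<ge> 1 \<and>
            (\<forall>i\<in>{1..n}. squarefree (s i) \<and> \<not> s i dvd 1) \<and>
            (\<forall>i\<in>{1..<n}. k i < k (Suc i)) \<and>
            c dvd 1 \<and>
            a = c * (\<Prod>i=1..n. s i ^ (2 ^ k i)))"
proof (intro conjI)
  show "\<exists>b c. squarefree c \<and> a = b ^ 2 * c"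
    using square_times_squarefree_decomposition[OF assms(1)] .
  obtain n s where s: "\<forall>i\<le>n. squarefree (s i)" "a = (\<Prod>i\<le>n. s i ^ 2 ^ i)"
    using squarefree_dyadic_decomposition[OF assms(1,2)] by blast
  then show "\<exists>n s. (\<forall>i\<le>n. squarefree (s i)) \<and> a = (\<Prod>i\<le>n. s i ^ 2 ^ i)"
    by blast
  show "\<exists>n s k c. n \<ge> 1 \<and> (\<forall>i\<in>{1..n}. squarefree (s i) \<and> \<not> s i dvd 1) \<and>
          (\<forall>i\<in>{1..<n}. k i < k (Suc i)) \<and> c dvd 1 \<and> a = c * (\<Prod>i=1..n. s i ^ 2 ^ k i)"
    using dyadic_decomposition_into_nonunits[OF s(1)] s(2) assms(3) by simp
qed

end
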